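(* Let $N\ge 1$, let $x_1,\dots,x_{2N-2}\in\mathbb{C}$ and let $z_1,\dots,z_N\in\mathbb{C}$ be pairwise distinct and distinct from all $x_i$. Then $$\sum_{r=1}^N\Big(\prod_{i=1}^{2N-2}(z_r-x_i)\Big)\Big(\prod_{s=1,\,s\ne r}^N\frac{1}{(z_r-z_s)^2}\Big)\Big[\sum_{i=1}^{2N-2}\frac{1}{z_r-x_i}-\sum_{s=1,\,s\ne r}^N\frac{2}{z_r-z_s}\Big]=0 .$$ *)

theory Defs
  imports Complex_Main
begin

end

theory Submission
  imports Defs "HOL-Complex_Analysis.Complex_Analysis"
begin

text \<open>The summand for index \<open>r\<close> is the residue at \<open>z\<^sub>r\<close> of the rational function
  \<open>f(w) = \<Prod>\<^sub>i (w - x\<^sub>i) / \<Prod>\<^sub>s (w - z\<^sub>s)\<^sup>2\<close>: at a double pole the residue is the derivative of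
  the regular part, and its logarithmic derivative gives the bracket. The numerator has degree
  \<open>2N - 2\<close> and the denominator degree \<open>2N\<close>, so \<open>f(w) = O(1/|w|\<^sup>2)\<close>; the integral of \<open>f\<close> over
  a large circle is therefore \<open>O(1/R)\<close>, while by the residue theorem it equals \<open>2\<pi>i\<close> times the
  sum of all residues. Hence that sum vanishes.\<close>

lemma residue_over_square:
  fixes g :: "complex \<Rightarrow> complex"
  assumes "open A" "a \<in> A" "g holomorphic_on A"
  shows "residue (\<lambda>w. g w / (w - a)^2) a = deriv g a"
  using residue_holomorphic_over_power[OF assms, of 1] by (simp add: numeral_2_eq_2)

lemma sum_residues_eq_0_if_decay:
  fixes f :: "complex \<Rightarrow> complex"
  assumes S: "finite S" and holo: "f holomorphic_on - S"
    and decay: "\<And>w. R0 \<le> norm w \<Longrightarrow> norm (f w) \<le> K / norm w ^ 2"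
  shows "(\<Sum>p\<in>S. residue f p) = 0"
proof -
  obtain B where B: "\<And>p. p \<in> S \<Longrightarrow> norm p \<le> B"
    using finite_imp_bounded[OF S] by (auto simp: bounded_iff)
  define \<Sigma> where "\<Sigma> = (\<Sum>p\<in>S. residue f p)"
  have "norm \<Sigma> \<le> K / R" if R: "max R0 (max 1 (B + 1)) \<le> R" for R
  proof -
    have "R > 0" using R by simp
    have inside: "norm p < R" if "p \<in> S" for p
      using B[OF that] R by simp
    have img: "path_image (circlepath 0 R) \<subseteq> UNIV - S"
      using inside \<open>R > 0\<close> by (auto simp: sphere_def)
    have "contour_integral (circlepath 0 R) f
        = 2 * pi * \<i> * (\<Sum>p\<in>S. winding_number (circlepath 0 R) p * residue f p)"
      using holo img
      by (intro Residue_theorem[OF open_UNIV connected_UNIV S]) (auto simp: Compl_eq_Diff_UNIV)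
    also have "\<dots> = 2 * pi * \<i> * \<Sigma>"
      unfolding \<Sigma>_def using inside by (simp add: winding_number_circlepath)
    finally have "contour_integral (circlepath 0 R) f = 2 * pi * \<i> * \<Sigma>" .
    moreover have "f contour_integrable_on circlepath 0 R"
      using img holo
      by (intro contour_integrable_continuous_circlepath holomorphic_on_imp_continuous_on)
         (auto simp: Compl_eq_Diff_UNIV)
    ultimately have integral: "(f has_contour_integral 2 * pi * \<i> * \<Sigma>) (circlepath 0 R)"
      using has_contour_integral_integral by metis
    have "0 \<le> K / R^2"
      using order_trans[OF norm_ge_zero decay, of "of_real R"] R by simp
    then have "norm (2 * pi * \<i> * \<Sigma>) \<le> K / R^2 * (2 * pi * R)"
      using decay R \<open>R > 0\<close> by (intro has_contour_integral_bound_circlepath[OF integral]) auto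
    then show ?thesis
      using \<open>R > 0\<close> by (simp add: norm_mult power2_eq_square field_simps)
  qed
  then have "eventually (\<lambda>R. norm \<Sigma> \<le> K / R) at_top"
    unfolding eventually_at_top_linorder by blast
  moreover have "((\<lambda>R. K / R) \<longlongrightarrow> 0) at_top"
    by (intro tendsto_divide_0[OF tendsto_const] filterlim_at_top_imp_at_infinity filterlim_ident)
  ultimately have "norm \<Sigma> \<le> 0"
    by (intro tendsto_le[OF trivial_limit_at_top_linorder _ tendsto_const]) auto
  then show ?thesis unfolding \<Sigma>_def by simp
qed

lemma residue_prod_div_prod_square:
  fixes x :: "'i \<Rightarrow> complex" and z :: "'j \<Rightarrow> complex"
  assumes J: "finite J" and r: "r \<in> J"
    and z_distinct: "\<And>s. s \<in> J \<Longrightarrow> s \<noteq> r \<Longrightarrow> z r \<noteq> z s"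
    and z_ne_x: "\<And>i. i \<in> I \<Longrightarrow> z r \<noteq> x i"
  shows "residue (\<lambda>w. (\<Prod>i\<in>I. w - x i) * (\<Prod>s\<in>J. 1 / (w - z s)^2)) (z r)
    = (\<Prod>i\<in>I. z r - x i) * (\<Prod>s\<in>J-{r}. 1 / (z r - z s)^2)
      * ((\<Sum>i\<in>I. 1 / (z r - x i)) - (\<Sum>s\<in>J-{r}. 2 / (z r - z s)))"
proof -
  define g where "g w = (\<Prod>i\<in>I. w - x i) * (\<Prod>s\<in>J-{r}. 1 / (w - z s)^2)" for w
  have split_pole: "(\<lambda>w. (\<Prod>i\<in>I. w - x i) * (\<Prod>s\<in>J. 1 / (w - z s)^2)) = (\<lambda>w. g w / (w - z r)^2)"
    using J r by (simp add: g_def prod.remove)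
  have "open (- z ` (J - {r}))"
    using J by (auto intro: finite_imp_closed)
  moreover have "z r \<in> - z ` (J - {r})"
    using z_distinct by force
  moreover have "g holomorphic_on - z ` (J - {r})"
    unfolding g_def by (intro holomorphic_intros) auto
  ultimately have residue: "residue (\<lambda>w. g w / (w - z r)^2) (z r) = deriv g (z r)"
    by (rule residue_over_square)
  have numerator: "((\<lambda>w. \<Prod>i\<in>I. w - x i) has_field_derivative
      (\<Prod>i\<in>I. z r - x i) * (\<Sum>i\<in>I. 1 / (z r - x i))) (at (z r))"
    by (intro has_field_derivative_prod') (auto intro!: derivative_eq_intros dest: z_ne_x)
  have denominator: "((\<lambda>w. \<Prod>s\<in>J-{r}. 1 / (w - z s)^2) has_field_derivative
      (\<Prod>s\<in>J-{r}. 1 / (z r - z s)^2) * (\<Sum>s\<in>J-{r}. - 2 / (z r - z s))) (at (z r))"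
  proof -
    have inverse_square: "((\<lambda>w. 1 / (w - z s)^2) has_field_derivative - 2 / (z r - z s)^3) (at (z r))"
      if "s \<in> J - {r}" for s
      using z_distinct[of s] that
      by (auto intro!: derivative_eq_intros simp: divide_simps eval_nat_numeral)
    have "((\<lambda>w. \<Prod>s\<in>J-{r}. 1 / (w - z s)^2) has_field_derivative
      (\<Prod>s\<in>J-{r}. 1 / (z r - z s)^2) * (\<Sum>s\<in>J-{r}. - 2 / (z r - z s)^3 / (1 / (z r - z s)^2)))
      (at (z r))"
      by (rule has_field_derivative_prod') (use inverse_square in \<open>auto dest: z_distinct\<close>)
    moreover have "- 2 / d^3 / (1 / d^2) = - 2 / d" for d :: complex
      by (simp add: divide_simps eval_nat_numeral)
    ultimately show ?thesis
      by simp
  qed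
  have "(g has_field_derivative (\<Prod>i\<in>I. z r - x i) * (\<Prod>s\<in>J-{r}. 1 / (z r - z s)^2)
      * ((\<Sum>i\<in>I. 1 / (z r - x i)) - (\<Sum>s\<in>J-{r}. 2 / (z r - z s)))) (at (z r))"
    unfolding g_def using DERIV_mult[OF numerator denominator]
    by (simp add: sum_negf algebra_simps)
  then show ?thesis
    unfolding split_pole residue by (rule DERIV_imp_deriv)
qed

lemma norm_prod_div_prod_square_le:
  fixes x :: "'i \<Rightarrow> complex" and z :: "'j \<Rightarrow> complex"
  assumes "\<And>i. i \<in> I \<Longrightarrow> norm (x i) \<le> M" and "\<And>s. s \<in> J \<Longrightarrow> norm (z s) \<le> M"
    and "2 * M \<le> norm w" and "w \<noteq> 0"
  shows "norm ((\<Prod>i\<in>I. w - x i) * (\<Prod>s\<in>J. 1 / (w - z s)^2))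
    \<le> (2 * norm w) ^ card I * (2 / norm w) ^ (2 * card J)"
proof -
  have "norm (w - x i) \<le> 2 * norm w" if "i \<in> I" for i
    using assms(1)[OF that] assms(3) norm_triangle_ineq4[of w "x i"] norm_ge_zero[of "x i"]
    by linarith
  then have numerator: "(\<Prod>i\<in>I. norm (w - x i)) \<le> (2 * norm w) ^ card I"
    using prod_mono[of I "\<lambda>i. norm (w - x i)" "\<lambda>_. 2 * norm w"] by simp
  have "norm (1 / (w - z s)^2) \<le> (2 / norm w)^2" if "s \<in> J" for s
  proof -
    have "norm w / 2 \<le> norm (w - z s)"
      using assms(2)[OF that] assms(3) norm_triangle_ineq2[of w "z s"] by linarith
    then have "(norm w / 2)^2 \<le> norm (w - z s)^2"
      by (intro power_mono) auto
    then show ?thesis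
      using assms(4) by (simp add: norm_divide norm_power divide_simps)
  qed
  then have "(\<Prod>s\<in>J. norm (1 / (w - z s)^2)) \<le> ((2 / norm w)^2) ^ card J"
    using prod_mono[of J "\<lambda>s. norm (1 / (w - z s)^2)" "\<lambda>_. (2 / norm w)^2"] by simp
  with numerator show ?thesis
    by (simp add: norm_mult prod_norm power_mult mult_mono prod_nonneg)
qed

lemma power_two_mult_times_power_two_div:
  fixes R :: real
  assumes "R \<noteq> 0"
  shows "(2 * R) ^ (2 * m) * (2 / R) ^ (2 * Suc m) = 4 * 16 ^ m / R^2"
proof -
  have "(2 * R) ^ (2 * m) * (2 / R) ^ (2 * Suc m) = ((2 * R) * (2 / R)) ^ (2 * m) * (2 / R)^2"
    unfolding power_mult_distrib mult_Suc_right power_add by (simp only: ac_simps)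
  also have "\<dots> = 4 * 16 ^ m / R^2"
    using assms by (simp add: power_mult power_divide)
  finally show ?thesis .
qed

lemma sum_residues_prod_div_prod_square_eq_0:
  fixes x :: "'i \<Rightarrow> complex" and z :: "'j \<Rightarrow> complex"
  assumes I: "finite I" and J: "finite J" and degree: "card I + 2 = 2 * card J"
  shows "(\<Sum>p\<in>z ` J. residue (\<lambda>w. (\<Prod>i\<in>I. w - x i) * (\<Prod>s\<in>J. 1 / (w - z s)^2)) p) = 0"
proof -
  obtain m where m: "card J = Suc m" "card I = 2 * m"
    using degree by (cases "card J") auto
  define M where "M = (\<Sum>i\<in>I. norm (x i)) + (\<Sum>s\<in>J. norm (z s))"
  have x_le: "norm (x i) \<le> M" if "i \<in> I" for i
    using member_le_sum[OF that _ I, of "\<lambda>i. norm (x i)"] sum_nonneg[of J "\<lambda>s. norm (z s)"]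
    unfolding M_def by force
  have z_le: "norm (z s) \<le> M" if "s \<in> J" for s
    using member_le_sum[OF that _ J, of "\<lambda>s. norm (z s)"] sum_nonneg[of I "\<lambda>i. norm (x i)"]
    unfolding M_def by force
  have "M \<ge> 0"
    unfolding M_def by (simp add: sum_nonneg)
  show ?thesis
  proof (rule sum_residues_eq_0_if_decay[where K = "4 * 16 ^ m"])
    show "(\<lambda>w. (\<Prod>i\<in>I. w - x i) * (\<Prod>s\<in>J. 1 / (w - z s)^2)) holomorphic_on - z ` J"
      by (intro holomorphic_intros) auto
    fix w :: complex
    assume w: "2 * M + 1 \<le> norm w"
    then have "w \<noteq> 0"
      using \<open>M \<ge> 0\<close> by auto
    have "norm ((\<Prod>i\<in>I. w - x i) * (\<Prod>s\<in>J. 1 / (w - z s)^2))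
        \<le> (2 * norm w) ^ card I * (2 / norm w) ^ (2 * card J)"
      using w \<open>w \<noteq> 0\<close> x_le z_le by (intro norm_prod_div_prod_square_le) auto
    also have "\<dots> = 4 * 16 ^ m / norm w ^ 2"
      unfolding m using \<open>w \<noteq> 0\<close> by (intro power_two_mult_times_power_two_div) simp
    finally show "norm ((\<Prod>i\<in>I. w - x i) * (\<Prod>s\<in>J. 1 / (w - z s)^2)) \<le> 4 * 16 ^ m / norm w ^ 2" .
  qed (use J in simp)
qed

theorem mainTheorem3:
  fixes N :: nat and x z :: "nat \<Rightarrow> complex"
  assumes "N \<ge> 1"
    and "\<And>r s. r \<in> {1..N} \<Longrightarrow> s \<in> {1..N} \<Longrightarrow> r \<noteq> s \<Longrightarrow> z r \<noteq> z s"
    and "\<And>r i. r \<in> {1..N} \<Longrightarrow> i \<in> {1..2*N-2} \<Longrightarrow> z r \<noteq> x i"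
  shows "(\<Sum>r=1..N. (\<Prod>i=1..2*N-2. z r - x i)
            * (\<Prod>s\<in>{1..N}-{r}. 1 / (z r - z s)^2)
            * ((\<Sum>i=1..2*N-2. 1 / (z r - x i)) - (\<Sum>s\<in>{1..N}-{r}. 2 / (z r - z s)))) = 0"
proof -
  define f where "f w = (\<Prod>i=1..2*N-2. w - x i) * (\<Prod>s=1..N. 1 / (w - z s)^2)" for w
  have "(\<Sum>p\<in>z ` {1..N}. residue f p) = 0"
    unfolding f_def using assms(1) by (intro sum_residues_prod_div_prod_square_eq_0) auto
  moreover have "inj_on z {1..N}"
    using assms(2) unfolding inj_on_def by blast
  moreover have "residue f (z r) = (\<Prod>i=1..2*N-2. z r - x i) * (\<Prod>s\<in>{1..N}-{r}. 1 / (z r - z s)^2)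
      * ((\<Sum>i=1..2*N-2. 1 / (z r - x i)) - (\<Sum>s\<in>{1..N}-{r}. 2 / (z r - z s)))"
    if "r \<in> {1..N}" for r
    unfolding f_def using that by (intro residue_prod_div_prod_square) (simp_all add: assms(2,3))
  ultimately show ?thesis
    by (simp add: sum.reindex)
qed

end
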